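(* Let $F$, $H$, $X$, $\Omega$, $Q$ and the sequences generated by the IneIREG method be as described in the context, and suppose $H$ is $\mu$-strongly monotone for some $\mu>0$. Then for all $x\in X$ and $k\ge0$, $$\|w_k-x\|^2-\|x_{k+1}-x\|^2\ge(1-\lambda_k^2L_k^2)\|w_k-y_k\|^2+2\lambda_k\langle F(x),y_k-x\rangle+2\lambda_k\eta_k\langle H(x),y_k-x\rangle+2\lambda_k\eta_k\mu\|y_k-x\|^2,$$ where $L_k:=L_F+\eta_kL_H$.
   Context: Work in $\mathbb{R}^n$ with Euclidean inner product $\langle\cdot,\cdot\rangle$ and norm $\|\cdot\|$. The maps $F\colon \mathrm{Dom}\,F\to\mathbb{R}^n$ and $H\colon\mathrm{Dom}\,H\to\mathbb{R}^n$ are monotone and Lipschitz continuous with constants $L_F>0$ and $L_H>0$; $H$ is $\mu$-strongly monotone means $\langle H(x)-H(y),x-y\rangle\ge\mu\|x-y\|^2$ for all $x,y\in\mathrm{Dom}\,H$. $X$ is a nonempty compact convex set and $\Omega$ a nonempty closed convex set with $X\subset\Omega\subset\mathrm{Dom}\,F\cap\mathrm{Dom}\,H$; $P_X,P_\Omega$ denote orthogonal projections. $Q:=\{x\in X:\langle F(x),y-x\rangle\ge0\ \forall y\in X\}$ is assumed nonempty. IneIREG method: start with $x_0=x_{-1}\in X$; for $k=0,1,\dots$, with parameters $\alpha_k\ge0$, $\lambda_k>0$, $\eta_k>0$, set $w_k=x_k+\alpha_k(x_k-x_{k-1})$, $w'_k=P_\Omega(w_k)$, $y_k=P_X\big(w_k-\lambda_k(F(w'_k)+\eta_kH(w'_k))\big)$,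 $x_{k+1}=P_X\big(w_k-\lambda_k(F(y_k)+\eta_kH(y_k))\big)$. *)

theory Defs
  imports "HOL-Analysis.Analysis"
begin

definition monotone_op :: "'a::real_inner set \<Rightarrow> ('a \<Rightarrow> 'a) \<Rightarrow> bool" where
  "monotone_op D T \<longleftrightarrow> (\<forall>x\<in>D. \<forall>y\<in>D. inner (T x - T y) (x - y) \<ge> 0)"

definition strongly_monotone_op :: "real \<Rightarrow> 'a::real_inner set \<Rightarrow> ('a \<Rightarrow> 'a) \<Rightarrow> bool" where
  "strongly_monotone_op \<mu> D T \<longleftrightarrow>
     (\<forall>x\<in>D. \<forall>y\<in>D. inner (T x - T y) (x - y) \<ge> \<mu> * (norm (x - y))\<^sup>2)"

abbreviation proj :: "'a::euclidean_space set \<Rightarrow> 'a \<Rightarrow> 'a" where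
  "proj S z \<equiv> closest_point S z"

text \<open>Sequences generated by IneIREG: x_0 = x_{-1} in X; xm k stands for x_{k-1},
  i.e. the inertial term uses x (k-1) for k>=1 and x 0 for k = 0.\<close>
definition ineireg ::
  "('a::euclidean_space \<Rightarrow> 'a) \<Rightarrow> ('a \<Rightarrow> 'a) \<Rightarrow> 'a set \<Rightarrow> 'a set \<Rightarrow>
   (nat \<Rightarrow> real) \<Rightarrow> (nat \<Rightarrow> real) \<Rightarrow> (nat \<Rightarrow> real) \<Rightarrow>
   (nat \<Rightarrow> 'a) \<Rightarrow> (nat \<Rightarrow> 'a) \<Rightarrow> (nat \<Rightarrow> 'a) \<Rightarrow> (nat \<Rightarrow> 'a) \<Rightarrow> bool" where
  "ineireg F H X \<Omega> \<alpha> lam \<eta> x w w' y \<longleftrightarrow>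
     x 0 \<in> X \<and>
     (\<forall>k. w k = x k + \<alpha> k *\<^sub>R (x k - (if k = 0 then x 0 else x (k - 1))) \<and>
          w' k = proj \<Omega> (w k) \<and>
          y k = proj X (w k - lam k *\<^sub>R (F (w' k) + \<eta> k *\<^sub>R H (w' k))) \<and>
          x (Suc k) = proj X (w k - lam k *\<^sub>R (F (y k) + \<eta> k *\<^sub>R H (y k))))"

end

theory Submission
  imports Defs
begin

text \<open>With \<open>G = F + \<eta>\<^sub>k H\<close>, the step is an extragradient step for \<open>G\<close>, which is
  \<open>L\<^sub>k\<close>-Lipschitz and \<open>\<eta>\<^sub>k \<mu>\<close>-strongly monotone. Since projection onto \<open>\<Omega>\<close> is
  nonexpansive and fixes \<open>y\<^sub>k\<close>, \<open>\<parallel>G w'\<^sub>k - G y\<^sub>k\<parallel> \<le> L\<^sub>k \<parallel>w\<^sub>k - y\<^sub>k\<parallel>\<close>. The two projection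
  inequalities then give the classical extragradient estimate
  \<open>\<parallel>w\<^sub>k - x\<parallel>\<^sup>2 - \<parallel>x\<^sub>k\<^sub>+\<^sub>1 - x\<parallel>\<^sup>2 \<ge> (1 - \<lambda>\<^sub>k\<^sup>2 L\<^sub>k\<^sup>2) \<parallel>w\<^sub>k - y\<^sub>k\<parallel>\<^sup>2 + 2 \<lambda>\<^sub>k \<langle>G y\<^sub>k, y\<^sub>k - x\<rangle>\<close>,
  and strong monotonicity bounds \<open>\<langle>G y\<^sub>k, y\<^sub>k - x\<rangle>\<close> below by
  \<open>\<langle>G x, y\<^sub>k - x\<rangle> + \<eta>\<^sub>k \<mu> \<parallel>y\<^sub>k - x\<parallel>\<^sup>2\<close>.\<close>

lemma extragradient_step_inequality:
  fixes w y x' z gw gy :: "'a::real_inner" and lam L :: real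
  assumes proj_x': "inner (w - lam *\<^sub>R gy - x') (x' - z) \<ge> 0"
    and proj_y: "inner (w - lam *\<^sub>R gw - y) (x' - y) \<le> 0"
    and lip: "norm (gw - gy) \<le> L * norm (w - y)" and lam: "lam \<ge> 0"
  shows "(norm (w - z))\<^sup>2 - (norm (x' - z))\<^sup>2
    \<ge> (1 - lam\<^sup>2 * L\<^sup>2) * (norm (w - y))\<^sup>2 + 2 * lam * inner gy (y - z)"
proof -
  define a b c where "a = w - y" and "b = x' - y" and "c = y - z"
  have e1: "inner a b + inner a c - (norm b)\<^sup>2 - inner b c - lam * inner gy b - lam * inner gy c \<ge> 0"
    using proj_x' unfolding a_def b_def c_def
    by (simp add: inner_simps inner_commute power2_norm_eq_inner algebra_simps)
  have e2: "inner a b \<le> lam * inner gw b"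
    using proj_y unfolding a_def b_def by (simp add: inner_simps algebra_simps)
  have lhs: "(norm (w - z))\<^sup>2 - (norm (x' - z))\<^sup>2
      = (norm a)\<^sup>2 + 2 * inner a c - (norm b)\<^sup>2 - 2 * inner b c"
  proof -
    have "w - z = a + c" "x' - z = b + c" unfolding a_def b_def c_def by simp_all
    then show ?thesis by (simp add: power2_norm_eq_inner inner_simps inner_commute)
  qed
  have "inner gw b - inner gy b \<le> norm (gw - gy) * norm b"
    using Cauchy_Schwarz_ineq2[of "gw - gy" b] by (simp add: inner_diff_left)
  also have "\<dots> \<le> L * norm a * norm b"
    using lip unfolding a_def by (simp add: mult_right_mono)
  finally have "lam * (inner gw b - inner gy b) \<le> lam * (L * norm a * norm b)"
    using lam by (simp add: mult_left_mono)
  moreover have "0 \<le> (norm b - lam * L * norm a)\<^sup>2" by simp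
  ultimately have "(norm a)\<^sup>2 + 2 * inner a c - (norm b)\<^sup>2 - 2 * inner b c
      \<ge> (1 - lam\<^sup>2 * L\<^sup>2) * (norm a)\<^sup>2 + 2 * lam * inner gy c"
    using e1 e2 by (simp add: power2_eq_square algebra_simps)
  then show ?thesis
    using lhs unfolding a_def c_def by simp
qed

lemma extragradient_projection_inequality:
  fixes X :: "'a::euclidean_space set" and G :: "'a \<Rightarrow> 'a"
  assumes "convex X" "closed X" "X \<noteq> {}" "z \<in> X"
    and y: "y = closest_point X (w - lam *\<^sub>R G w')"
    and x': "x' = closest_point X (w - lam *\<^sub>R G y)"
    and "norm (G w' - G y) \<le> L * norm (w - y)" "lam \<ge> 0"
  shows "(norm (w - z))\<^sup>2 - (norm (x' - z))\<^sup>2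
    \<ge> (1 - lam\<^sup>2 * L\<^sup>2) * (norm (w - y))\<^sup>2 + 2 * lam * inner (G y) (y - z)"
proof (rule extragradient_step_inequality)
  have "inner (w - lam *\<^sub>R G y - x') (z - x') \<le> 0"
    using closest_point_dot[OF assms(1,2,4)] x' by blast
  then show "inner (w - lam *\<^sub>R G y - x') (x' - z) \<ge> 0"
    by (metis inner_minus_right minus_diff_eq neg_0_le_iff_le)
  have "x' \<in> X" using closest_point_in_set[OF assms(2,3)] x' by blast
  then show "inner (w - lam *\<^sub>R G w' - y) (x' - y) \<le> 0"
    using closest_point_dot[OF assms(1,2)] y by blast
qed (use assms in auto)

lemma lipschitz_on_closest_point_norm_diff:
  fixes G :: "'a::euclidean_space \<Rightarrow> 'b::real_normed_vector"
  assumes "L-lipschitz_on D G" "convex \<Omega>" "closed \<Omega>" "\<Omega> \<noteq> {}" "\<Omega> \<subseteq> D" "y \<in> \<Omega>"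
  shows "norm (G (closest_point \<Omega> w) - G y) \<le> L * norm (w - y)"
proof -
  have "norm (G (closest_point \<Omega> w) - G y) \<le> L * norm (closest_point \<Omega> w - y)"
    using lipschitz_on_normD[OF assms(1)] closest_point_in_set[OF assms(3,4)] assms(5,6) by blast
  also have "\<dots> \<le> L * norm (w - y)"
    using closest_point_lipschitz[OF assms(2-4), of w y] closest_point_self[OF assms(6)]
      lipschitz_on_nonneg[OF assms(1)]
    by (simp add: dist_norm mult_left_mono)
  finally show ?thesis .
qed

lemma strongly_monotone_op_add_scaleR:
  assumes "monotone_op D F" "strongly_monotone_op \<mu> D H" "c \<ge> 0"
  shows "strongly_monotone_op (c * \<mu>) D (\<lambda>p. F p + c *\<^sub>R H p)"
  unfolding strongly_monotone_op_def
proof (intro ballI)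
  fix p q assume pq: "p \<in> D" "q \<in> D"
  have "0 \<le> inner (F p - F q) (p - q)"
    using assms(1) pq unfolding monotone_op_def by blast
  moreover have "c * (\<mu> * (norm (p - q))\<^sup>2) \<le> c * inner (H p - H q) (p - q)"
    using assms(2,3) pq unfolding strongly_monotone_op_def by (simp add: mult_left_mono)
  ultimately show "c * \<mu> * (norm (p - q))\<^sup>2
      \<le> inner (F p + c *\<^sub>R H p - (F q + c *\<^sub>R H q)) (p - q)"
    by (simp add: inner_simps algebra_simps)
qed

theorem proposition4p2:
  fixes F H :: "'a::euclidean_space \<Rightarrow> 'a"
    and DF DH X \<Omega> :: "'a set"
    and LF LH \<mu> :: real
    and \<alpha> lam \<eta> :: "nat \<Rightarrow> real"
    and x w w' y :: "nat \<Rightarrow> 'a"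
  assumes F_mono: "monotone_op DF F" and F_lip: "LF-lipschitz_on DF F" and LF_pos: "LF > 0"
    and H_mono: "monotone_op DH H" and H_lip: "LH-lipschitz_on DH H" and LH_pos: "LH > 0"
    and H_strong: "strongly_monotone_op \<mu> DH H" and mu_pos: "\<mu> > 0"
    and X_ne: "X \<noteq> {}" and X_compact: "compact X" and X_convex: "convex X"
    and Om_ne: "\<Omega> \<noteq> {}" and Om_closed: "closed \<Omega>" and Om_convex: "convex \<Omega>"
    and X_sub: "X \<subseteq> \<Omega>" and Om_sub: "\<Omega> \<subseteq> DF \<inter> DH"
    and Q_ne: "{z \<in> X. \<forall>v\<in>X. inner (F z) (v - z) \<ge> 0} \<noteq> {}"
    and alpha_nn: "\<forall>k. \<alpha> k \<ge> 0" and lambda_pos: "\<forall>k. lam k > 0" and eta_pos: "\<forall>k. \<eta> k > 0"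
    and iter: "ineireg F H X \<Omega> \<alpha> lam \<eta> x w w' y"
  shows "\<forall>z\<in>X. \<forall>k.
    (norm (w k - z))\<^sup>2 - (norm (x (Suc k) - z))\<^sup>2 \<ge>
      (1 - (lam k)\<^sup>2 * (LF + \<eta> k * LH)\<^sup>2) * (norm (w k - y k))\<^sup>2
      + 2 * lam k * inner (F z) (y k - z)
      + 2 * lam k * \<eta> k * inner (H z) (y k - z)
      + 2 * lam k * \<eta> k * \<mu> * (norm (y k - z))\<^sup>2"
proof (intro ballI allI)
  fix z k assume z: "z \<in> X"
  define G where "G = (\<lambda>p. F p + \<eta> k *\<^sub>R H p)"
  define D where "D = DF \<inter> DH"
  have X_closed: "closed X" using X_compact compact_imp_closed by blast
  have eta: "\<eta> k \<ge> 0" and lam: "lam k \<ge> 0" using eta_pos lambda_pos less_imp_le by blast+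
  have step: "w' k = closest_point \<Omega> (w k)" "y k = closest_point X (w k - lam k *\<^sub>R G (w' k))"
    "x (Suc k) = closest_point X (w k - lam k *\<^sub>R G (y k))"
    using iter unfolding ineireg_def G_def by auto
  have y: "y k \<in> X" using step(2) closest_point_in_set[OF X_closed X_ne] by simp
  have yOm: "y k \<in> \<Omega>" using y X_sub by blast
  have yD: "y k \<in> D" and zD: "z \<in> D" and Om_D: "\<Omega> \<subseteq> D"
    using y z X_sub Om_sub unfolding D_def by auto
  have "(LF + \<eta> k * LH)-lipschitz_on D G"
    unfolding G_def D_def
    by (intro lipschitz_on_add lipschitz_on_cmult_nonneg lipschitz_on_subset[OF F_lip]
        lipschitz_on_subset[OF H_lip] eta) auto
  from lipschitz_on_closest_point_norm_diff[OF this Om_convex Om_closed Om_ne Om_D yOm]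
  have "norm (G (w' k) - G (y k)) \<le> (LF + \<eta> k * LH) * norm (w k - y k)"
    using step(1) by simp
  note estimate = extragradient_projection_inequality[OF X_convex X_closed X_ne z step(2,3) this lam]
  have "monotone_op D F" "strongly_monotone_op \<mu> D H"
    using F_mono H_strong unfolding D_def monotone_op_def strongly_monotone_op_def by blast+
  then have "strongly_monotone_op (\<eta> k * \<mu>) D G"
    unfolding G_def using eta by (rule strongly_monotone_op_add_scaleR)
  then have "\<eta> k * \<mu> * (norm (y k - z))\<^sup>2 \<le> inner (G (y k) - G z) (y k - z)"
    using yD zD unfolding strongly_monotone_op_def by blast
  then have "inner (F z) (y k - z) + \<eta> k * inner (H z) (y k - z) + \<eta> k * \<mu> * (norm (y k - z))\<^sup>2
      \<le> inner (G (y k)) (y k - z)"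
    unfolding G_def by (simp add: inner_simps algebra_simps)
  then have "2 * lam k * (inner (F z) (y k - z) + \<eta> k * inner (H z) (y k - z)
      + \<eta> k * \<mu> * (norm (y k - z))\<^sup>2) \<le> 2 * lam k * inner (G (y k)) (y k - z)"
    using lam by (intro mult_left_mono) auto
  with estimate
  show "(norm (w k - z))\<^sup>2 - (norm (x (Suc k) - z))\<^sup>2 \<ge>
      (1 - (lam k)\<^sup>2 * (LF + \<eta> k * LH)\<^sup>2) * (norm (w k - y k))\<^sup>2
      + 2 * lam k * inner (F z) (y k - z)
      + 2 * lam k * \<eta> k * inner (H z) (y k - z)
      + 2 * lam k * \<eta> k * \<mu> * (norm (y k - z))\<^sup>2"
    by (simp only: distrib_left mult.assoc)
qed

end
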